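(* Let $0<\gamma\le 1/2$, let $(x,z)$ be an optimal extreme point solution of LP-CVRP-MD, run the sampling procedure described in the context, and let $U$ be the set of clients that do not lie on any sampled branching. Then $\mathbb E[\ell(U)] \le e^{-\gamma}\cdot \mathrm{lb}$, where $\ell_v = \frac{2}{k}c(v,R)$, $\ell(S)=\sum_{v\in S}\ell_v$, and $\mathrm{lb}=\ell(C)$.
   Context: Problem: nonempty disjoint finite sets $C$ (clients) and $R$ (depots), $V = C\cup R$, a metric $c$ on $V$, integer capacity $k \ge 3$; $c(v,R):=\min_{r\in R}c(v,r)>0$ for every client $v$. Work in the complete bidirected graph on $V$ (directed edges $(a,b)$ of cost $c(a,b)$); for a vector $y$ on directed edges and $S\subseteq V$, $y(\delta^{in}(S))$, $y(\delta^{out}(S))$ are sums over edges entering/leaving $S$. LP-CVRP-MD has variables $x^r_{v,e}\ge 0$ ($r\in R$, $v\in C$, $e$ a directed edge) and $z^r_{v,u}\ge0$ ($r\in R$, $v\in C$, $u\in V$), objective: minimize $\sum_{r,v,e} c(e)x^r_{v,e}$, constraints: (1) $x^r_v(\delta^{out}(u))$ is $2z^r_{v,v}$ if $u=r$, $0$ if $u=v$, $z^r_{v,u}$ otherwise; (2) $x^r_v(\delta^{in}(u))$ is $0$ if $u=r$, $2z^r_{v,v}$ if $u=v$, $z^r_{v,u}$ otherwise (for all $r\in R,v\in C,u\in V$); (3) $x^r_v(\delta^{in}(S))\ge z^r_{v,u}$ whenever $u\in S\subseteq V\setminus\{r\}$; (4) $\sum_{r\in R}\sum_{v\in C} z^r_{v,u}=1$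 for all $u\in C$; (5) $z^r_{v,u}\le z^r_{v,v}$ for $u,v\in C$; (6) $z^r_{v,u}=0$ if $u,v\in C$ and $c(u,r)>c(v,r)$; (7) $\sum_{u\in C}z^r_{v,u}\le k z^r_{v,v}$. An $r$-branching is a tree rooted at $r$ oriented away from $r$. Sampling procedure: for each $r\in R$, $v\in C$, take $r$-branchings $B_1,B_2,\dots$ (finitely many) with weights $\mu_i\ge0$, $\sum_i\mu_i = 2\gamma z^r_{v,v}$, such that every directed edge $e$ lies in branchings of total weight at most $\gamma x^r_{v,e}$, $v$ lies on every $B_i$, and every client $u\neq v$ lies in branchings of total weight at least $\gamma z^r_{v,u}$ (such a decomposition exists by a theorem of Bang-Jensen, Frank and Jackson). Independently (over all $r,v,i$) include each $B_i$ with probability $\mu_i$. *)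

theory Defs
  imports "HOL-Probability.Probability"
begin

definition dedges :: "'a set \<Rightarrow> ('a \<times> 'a) set" where
  "dedges V = {(a, b). a \<in> V \<and> b \<in> V \<and> a \<noteq> b}"

definition delta_in :: "'a set \<Rightarrow> 'a set \<Rightarrow> ('a \<times> 'a) set" where
  "delta_in V S = {(a, b) \<in> dedges V. a \<notin> S \<and> b \<in> S}"

definition delta_out :: "'a set \<Rightarrow> 'a set \<Rightarrow> ('a \<times> 'a) set" where
  "delta_out V S = {(a, b) \<in> dedges V. a \<in> S \<and> b \<notin> S}"

definition metric_on :: "'a set \<Rightarrow> ('a \<Rightarrow> 'a \<Rightarrow> real) \<Rightarrow> bool" where
  "metric_on V c \<longleftrightarrow>
     (\<forall>a\<in>V. c a a = 0) \<and>
     (\<forall>a\<in>V. \<forall>b\<in>V. c a b \<ge> 0 \<and> c a b = c b a) \<and>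
     (\<forall>a\<in>V. \<forall>b\<in>V. \<forall>d\<in>V. c a d \<le> c a b + c b d)"

definition distR :: "('a \<Rightarrow> 'a \<Rightarrow> real) \<Rightarrow> 'a set \<Rightarrow> 'a \<Rightarrow> real" where
  "distR c R v = Min ((\<lambda>r. c v r) ` R)"

(* Feasibility for LP-CVRP-MD.  x r v e = x^r_{v,e},  z r v u = z^r_{v,u}.
   Variables outside the index domain are required to be 0 (they do not exist in the LP). *)
definition lp_feasible ::
  "'a set \<Rightarrow> 'a set \<Rightarrow> ('a \<Rightarrow> 'a \<Rightarrow> real) \<Rightarrow> nat \<Rightarrow>
   ('a \<Rightarrow> 'a \<Rightarrow> ('a \<times> 'a) \<Rightarrow> real) \<Rightarrow> ('a \<Rightarrow> 'a \<Rightarrow> 'a \<Rightarrow> real) \<Rightarrow> bool" where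
  "lp_feasible C R c k x z \<longleftrightarrow>
    (let V = C \<union> R in
     (\<forall>r v e. \<not> (r \<in> R \<and> v \<in> C \<and> e \<in> dedges V) \<longrightarrow> x r v e = 0) \<and>
     (\<forall>r v u. \<not> (r \<in> R \<and> v \<in> C \<and> u \<in> V) \<longrightarrow> z r v u = 0) \<and>
     (\<forall>r\<in>R. \<forall>v\<in>C. \<forall>e\<in>dedges V. x r v e \<ge> 0) \<and>
     (\<forall>r\<in>R. \<forall>v\<in>C. \<forall>u\<in>V. z r v u \<ge> 0) \<and>
     \<comment> \<open>(1)\<close>
     (\<forall>r\<in>R. \<forall>v\<in>C. \<forall>u\<in>V.
        (\<Sum>e\<in>delta_out V {u}. x r v e) =
          (if u = r then 2 * z r v v else if u = v then 0 else z r v u)) \<and>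
     \<comment> \<open>(2)\<close>
     (\<forall>r\<in>R. \<forall>v\<in>C. \<forall>u\<in>V.
        (\<Sum>e\<in>delta_in V {u}. x r v e) =
          (if u = r then 0 else if u = v then 2 * z r v v else z r v u)) \<and>
     \<comment> \<open>(3)\<close>
     (\<forall>r\<in>R. \<forall>v\<in>C. \<forall>S u. S \<subseteq> V - {r} \<and> u \<in> S \<longrightarrow>
        (\<Sum>e\<in>delta_in V S. x r v e) \<ge> z r v u) \<and>
     \<comment> \<open>(4)\<close>
     (\<forall>u\<in>C. (\<Sum>r\<in>R. \<Sum>v\<in>C. z r v u) = 1) \<and>
     \<comment> \<open>(5)\<close>
     (\<forall>r\<in>R. \<forall>v\<in>C. \<forall>u\<in>C. z r v u \<le> z r v v) \<and>
     \<comment> \<open>(6)\<close>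
     (\<forall>r\<in>R. \<forall>v\<in>C. \<forall>u\<in>C. c u r > c v r \<longrightarrow> z r v u = 0) \<and>
     \<comment> \<open>(7)\<close>
     (\<forall>r\<in>R. \<forall>v\<in>C. (\<Sum>u\<in>C. z r v u) \<le> real k * z r v v))"

definition lp_obj ::
  "'a set \<Rightarrow> 'a set \<Rightarrow> ('a \<Rightarrow> 'a \<Rightarrow> real) \<Rightarrow> ('a \<Rightarrow> 'a \<Rightarrow> ('a \<times> 'a) \<Rightarrow> real) \<Rightarrow> real" where
  "lp_obj C R c x = (\<Sum>r\<in>R. \<Sum>v\<in>C. \<Sum>e\<in>dedges (C \<union> R). c (fst e) (snd e) * x r v e)"

definition lp_optimal where
  "lp_optimal C R c k x z \<longleftrightarrow> lp_feasible C R c k x z \<and>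
     (\<forall>x' z'. lp_feasible C R c k x' z' \<longrightarrow> lp_obj C R c x \<le> lp_obj C R c x')"

definition lp_extreme where
  "lp_extreme C R c k x z \<longleftrightarrow> lp_feasible C R c k x z \<and>
     (\<forall>x1 z1 x2 z2 (t::real). lp_feasible C R c k x1 z1 \<and> lp_feasible C R c k x2 z2 \<and>
        0 < t \<and> t < 1 \<and>
        x = (\<lambda>r v e. t * x1 r v e + (1 - t) * x2 r v e) \<and>
        z = (\<lambda>r v u. t * z1 r v u + (1 - t) * z2 r v u)
        \<longrightarrow> x1 = x2 \<and> z1 = z2)"

definition bverts :: "'a \<Rightarrow> ('a \<times> 'a) set \<Rightarrow> 'a set" where
  "bverts r B = insert r (fst ` B \<union> snd ` B)"

(* r-branching: tree rooted at r, oriented away from r (arborescence) in the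
   complete bidirected graph on V *)
definition branching :: "'a set \<Rightarrow> 'a \<Rightarrow> ('a \<times> 'a) set \<Rightarrow> bool" where
  "branching V r B \<longleftrightarrow> r \<in> V \<and> B \<subseteq> dedges V \<and>
     (\<forall>(a, b) \<in> B. b \<noteq> r) \<and>
     (\<forall>a a' b. (a, b) \<in> B \<and> (a', b) \<in> B \<longrightarrow> a = a') \<and>
     (\<forall>w\<in>bverts r B. (r, w) \<in> B\<^sup>*)"

definition valid_decomp ::
  "'a set \<Rightarrow> 'a set \<Rightarrow> real \<Rightarrow> ('a \<Rightarrow> 'a \<Rightarrow> ('a \<times> 'a) \<Rightarrow> real) \<Rightarrow> ('a \<Rightarrow> 'a \<Rightarrow> 'a \<Rightarrow> real) \<Rightarrow>
   'a \<Rightarrow> 'a \<Rightarrow> (('a \<times> 'a) set \<times> real) list \<Rightarrow> bool" where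
  "valid_decomp C R \<gamma> x z r v L \<longleftrightarrow>
    (let V = C \<union> R in
     (\<forall>(B, \<mu>) \<in> set L. branching V r B \<and> \<mu> \<ge> 0 \<and> v \<in> bverts r B) \<and>
     (\<Sum>(B, \<mu>) \<leftarrow> L. \<mu>) = 2 * \<gamma> * z r v v \<and>
     (\<forall>e\<in>dedges V. (\<Sum>(B, \<mu>) \<leftarrow> filter (\<lambda>(B, \<mu>). e \<in> B) L. \<mu>) \<le> \<gamma> * x r v e) \<and>
     (\<forall>u\<in>C - {v}. (\<Sum>(B, \<mu>) \<leftarrow> filter (\<lambda>(B, \<mu>). u \<in> bverts r B) L. \<mu>) \<ge> \<gamma> * z r v u))"

definition sample_index :: "'a set \<Rightarrow> 'a set \<Rightarrow> ('a \<Rightarrow> 'a \<Rightarrow> (('a \<times> 'a) set \<times> real) list)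
    \<Rightarrow> ('a \<times> 'a \<times> nat) set" where
  "sample_index C R fam = (SIGMA r:R. SIGMA v:C. {..<length (fam r v)})"

definition sample_pmf :: "'a set \<Rightarrow> 'a set \<Rightarrow> ('a \<Rightarrow> 'a \<Rightarrow> (('a \<times> 'a) set \<times> real) list)
    \<Rightarrow> ('a \<times> 'a \<times> nat \<Rightarrow> bool) pmf" where
  "sample_pmf C R fam = Pi_pmf (sample_index C R fam) False
     (\<lambda>(r, v, i). bernoulli_pmf (snd (fam r v ! i)))"

definition uncovered :: "'a set \<Rightarrow> 'a set \<Rightarrow> ('a \<Rightarrow> 'a \<Rightarrow> (('a \<times> 'a) set \<times> real) list)
    \<Rightarrow> ('a \<times> 'a \<times> nat \<Rightarrow> bool) \<Rightarrow> 'a set" where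
  "uncovered C R fam \<omega> = {u \<in> C. \<not> (\<exists>(r, v, i) \<in> sample_index C R fam.
      \<omega> (r, v, i) \<and> u \<in> bverts r (fst (fam r v ! i)))}"

definition ell :: "'a set \<Rightarrow> ('a \<Rightarrow> 'a \<Rightarrow> real) \<Rightarrow> nat \<Rightarrow> 'a set \<Rightarrow> real" where
  "ell R c k S = (\<Sum>v\<in>S. 2 / real k * distR c R v)"

end

theory Submission imports Defs begin

(* A client u stays uncovered only if every sampled branching through u is rejected. By
   independence this happens with probability at most the product of the (1 - mu_j), hence at most
   exp (- sum of the mu_j), and the decomposition puts weight at least
   gamma * (sum over r, v of z^r_{v,u}) = gamma on branchings through u, by LP constraint (4).
   Linearity of expectation then bounds E[ell(U)] by exp (- gamma) * ell(C). *)

lemma prob_bernoulli_False_le_exp: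
  assumes "0 \<le> p"
  shows "measure_pmf.prob (bernoulli_pmf p) {False} \<le> exp (- p)"
proof (cases "p \<le> 1")
  case True
  then show ?thesis
    using assms exp_ge_add_one_self[of "- p"] by (simp add: measure_pmf_single pmf_bernoulli_False)
next
  case False
  \<comment> \<open>\<open>bernoulli_pmf\<close> clamps its parameter to [0, 1]\<close>
  then have "bernoulli_pmf p = bernoulli_pmf 1"
    by (intro pmf_eqI) (simp add: bernoulli_pmf.rep_eq)
  then show ?thesis by (simp add: measure_pmf_single)
qed

lemma prob_Pi_bernoulli_all_False_le_exp:
  assumes "finite A" "J \<subseteq> A" "\<And>j. j \<in> J \<Longrightarrow> 0 \<le> p j"
  shows "measure_pmf.prob (Pi_pmf A dflt (\<lambda>j. bernoulli_pmf (p j))) {\<omega>. \<forall>j\<in>J. \<not> \<omega> j}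
           \<le> exp (- (\<Sum>j\<in>J. p j))"
proof -
  define B where "B = (\<lambda>j. if j \<in> J then {False} else UNIV)"
  have "{\<omega>. \<forall>j\<in>J. \<not> \<omega> j} = Pi A B"
    using assms(2) by (auto simp: B_def Pi_def)
  then have "measure_pmf.prob (Pi_pmf A dflt (\<lambda>j. bernoulli_pmf (p j))) {\<omega>. \<forall>j\<in>J. \<not> \<omega> j}
      = (\<Prod>j\<in>A. measure_pmf.prob (bernoulli_pmf (p j)) (B j))"
    by (simp add: measure_Pi_pmf_Pi assms(1))
  also have "\<dots> = (\<Prod>j\<in>J. measure_pmf.prob (bernoulli_pmf (p j)) {False})"
    using assms(1,2) by (intro prod.mono_neutral_cong_right) (auto simp: B_def)
  also have "\<dots> \<le> (\<Prod>j\<in>J. exp (- p j))"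
    by (intro prod_mono) (simp add: prob_bernoulli_False_le_exp assms(3))
  also have "\<dots> = exp (- (\<Sum>j\<in>J. p j))"
    using finite_subset[OF assms(2,1)] by (subst sum_negf[symmetric]) (simp add: exp_sum)
  finally show ?thesis .
qed

lemma expectation_sum_random_subset:
  fixes l :: "'a \<Rightarrow> real"
  assumes "finite C"
  shows "measure_pmf.expectation M (\<lambda>\<omega>. \<Sum>u\<in>{u\<in>C. P u \<omega>}. l u)
           = (\<Sum>u\<in>C. l u * measure_pmf.prob M {\<omega>. P u \<omega>})"
proof -
  have "(\<Sum>u\<in>{u\<in>C. P u \<omega>}. l u) = (\<Sum>u\<in>C. l u * indicator {\<omega>. P u \<omega>} \<omega>)" for \<omega>
    unfolding sum.inter_filter[OF assms] by (intro sum.cong) (auto simp: indicator_def)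
  then show ?thesis
    by (simp add: Bochner_Integration.integral_sum measure_pmf.integrable_const_bound[where B=1])
qed

lemma sum_list_filter_eq_sum_nth:
  "(\<Sum>(B, \<mu>) \<leftarrow> filter P L. \<mu>) = (\<Sum>i<length L. if P (L ! i) then snd (L ! i) else (0::real))"
proof -
  have "(\<Sum>(B, \<mu>) \<leftarrow> filter P L. \<mu>) = (\<Sum>b \<leftarrow> L. if P b then snd b else 0)"
    by (simp add: sum_list_map_filter' split_def)
  also have "\<dots> = (\<Sum>i<length L. if P (L ! i) then snd (L ! i) else 0)"
    by (simp add: sum_list_sum_nth atLeast0LessThan)
  finally show ?thesis .
qed

definition branch_verts ::
  "('a \<Rightarrow> 'a \<Rightarrow> (('a \<times> 'a) set \<times> real) list) \<Rightarrow> 'a \<times> 'a \<times> nat \<Rightarrow> 'a set" where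
  "branch_verts fam = (\<lambda>(r, v, i). bverts r (fst (fam r v ! i)))"

definition branch_weight ::
  "('a \<Rightarrow> 'a \<Rightarrow> (('a \<times> 'a) set \<times> real) list) \<Rightarrow> 'a \<times> 'a \<times> nat \<Rightarrow> real" where
  "branch_weight fam = (\<lambda>(r, v, i). snd (fam r v ! i))"

definition covering_branches ::
  "'a set \<Rightarrow> 'a set \<Rightarrow> ('a \<Rightarrow> 'a \<Rightarrow> (('a \<times> 'a) set \<times> real) list) \<Rightarrow> 'a \<Rightarrow> ('a \<times> 'a \<times> nat) set"
  where "covering_branches C R fam u = {j \<in> sample_index C R fam. u \<in> branch_verts fam j}"

definition covering_weight ::
  "'a set \<Rightarrow> 'a set \<Rightarrow> ('a \<Rightarrow> 'a \<Rightarrow> (('a \<times> 'a) set \<times> real) list) \<Rightarrow> 'a \<Rightarrow> real" where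
  "covering_weight C R fam u = (\<Sum>j\<in>covering_branches C R fam u. branch_weight fam j)"

lemma finite_sample_index: "finite C \<Longrightarrow> finite R \<Longrightarrow> finite (sample_index C R fam)"
  by (simp add: sample_index_def)

lemma sample_pmf_eq_Pi_bernoulli:
  "sample_pmf C R fam =
     Pi_pmf (sample_index C R fam) False (\<lambda>j. bernoulli_pmf (branch_weight fam j))"
  unfolding sample_pmf_def branch_weight_def by (rule Pi_pmf_cong) (auto split: prod.splits)

lemma uncovered_eq: "uncovered C R fam \<omega> = {u \<in> C. \<forall>j \<in> covering_branches C R fam u. \<not> \<omega> j}"
  unfolding uncovered_def covering_branches_def branch_verts_def by auto

lemma branch_weight_nonneg:
  assumes "\<forall>r\<in>R. \<forall>v\<in>C. valid_decomp C R \<gamma> x z r v (fam r v)"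
    and "j \<in> sample_index C R fam"
  shows "0 \<le> branch_weight fam j"
proof -
  obtain r v i where j: "j = (r, v, i)" "r \<in> R" "v \<in> C" "i < length (fam r v)"
    using assms(2) unfolding sample_index_def by auto
  then have "fam r v ! i \<in> set (fam r v)" by simp
  with assms(1) j(2,3) show ?thesis
    unfolding j(1) branch_weight_def valid_decomp_def Let_def by fastforce
qed

lemma covering_weight_eq:
  assumes "finite C" "finite R"
  shows "covering_weight C R fam u =
           (\<Sum>r\<in>R. \<Sum>v\<in>C. \<Sum>(B, \<mu>) \<leftarrow> filter (\<lambda>(B, \<mu>). u \<in> bverts r B) (fam r v). \<mu>)"
  using assms unfolding covering_weight_def covering_branches_def sum_list_filter_eq_sum_nth
  by (simp add: sum.inter_filter sample_index_def sum.Sigma branch_verts_def branch_weight_def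
      split_beta)

lemma valid_decomp_covering_ge:
  assumes "valid_decomp C R \<gamma> x z r v L" "u \<in> C" "0 \<le> \<gamma>" "0 \<le> z r v v"
  shows "\<gamma> * z r v u \<le> (\<Sum>(B, \<mu>) \<leftarrow> filter (\<lambda>(B, \<mu>). u \<in> bverts r B) L. \<mu>)"
proof (cases "u = v")
  case True
  then have "filter (\<lambda>(B, \<mu>). u \<in> bverts r B) L = L"
    using assms(1) unfolding valid_decomp_def Let_def by (intro filter_True) auto
  with True assms show ?thesis
    unfolding valid_decomp_def Let_def by (simp add: mult_left_mono)
next
  case False
  with assms(1,2) show ?thesis unfolding valid_decomp_def Let_def by auto
qed

lemma covering_weight_ge:
  assumes "finite C" "finite R" "lp_feasible C R c k x z" "0 \<le> \<gamma>"
    and "\<forall>r\<in>R. \<forall>v\<in>C. valid_decomp C R \<gamma> x z r v (fam r v)" and "u \<in> C"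
  shows "\<gamma> \<le> covering_weight C R fam u"
proof -
  have z_nonneg: "0 \<le> z r v v" if "r \<in> R" "v \<in> C" for r v
    using assms(3) that unfolding lp_feasible_def Let_def by auto
  have "\<gamma> = (\<Sum>r\<in>R. \<Sum>v\<in>C. \<gamma> * z r v u)"
    using assms(3,6) unfolding lp_feasible_def Let_def by (simp add: sum_distrib_left[symmetric])
  also have "\<dots> \<le> covering_weight C R fam u"
    unfolding covering_weight_eq[OF assms(1,2)]
    using assms(4-6) z_nonneg by (intro sum_mono valid_decomp_covering_ge) auto
  finally show ?thesis .
qed

lemma prob_uncovered_le_exp:
  assumes "finite C" "finite R" "lp_feasible C R c k x z" "0 \<le> \<gamma>"
    and "\<forall>r\<in>R. \<forall>v\<in>C. valid_decomp C R \<gamma> x z r v (fam r v)" and "u \<in> C"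
  shows "measure_pmf.prob (sample_pmf C R fam) {\<omega>. \<forall>j \<in> covering_branches C R fam u. \<not> \<omega> j}
           \<le> exp (- \<gamma>)"
proof -
  have "measure_pmf.prob (sample_pmf C R fam) {\<omega>. \<forall>j \<in> covering_branches C R fam u. \<not> \<omega> j}
      \<le> exp (- covering_weight C R fam u)"
    unfolding sample_pmf_eq_Pi_bernoulli covering_weight_def
    using assms(1,2,5) finite_sample_index
    by (intro prob_Pi_bernoulli_all_False_le_exp)
       (auto simp: covering_branches_def intro: branch_weight_nonneg)
  also have "\<dots> \<le> exp (- \<gamma>)"
    using covering_weight_ge[OF assms] by simp
  finally show ?thesis .
qed

theorem lemma4:
  fixes C R :: "'a set" and c :: "'a \<Rightarrow> 'a \<Rightarrow> real" and k :: nat and \<gamma> :: real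
    and x :: "'a \<Rightarrow> 'a \<Rightarrow> ('a \<times> 'a) \<Rightarrow> real" and z :: "'a \<Rightarrow> 'a \<Rightarrow> 'a \<Rightarrow> real"
    and fam :: "'a \<Rightarrow> 'a \<Rightarrow> (('a \<times> 'a) set \<times> real) list"
  assumes "finite C" "finite R" "C \<noteq> {}" "R \<noteq> {}" "C \<inter> R = {}"
    and "metric_on (C \<union> R) c" and "k \<ge> 3"
    and "\<forall>v\<in>C. distR c R v > 0"
    and "0 < \<gamma>" "\<gamma> \<le> 1/2"
    and "lp_optimal C R c k x z" and "lp_extreme C R c k x z"
    and "\<forall>r\<in>R. \<forall>v\<in>C. valid_decomp C R \<gamma> x z r v (fam r v)"
  shows "measure_pmf.expectation (sample_pmf C R fam) (\<lambda>\<omega>. ell R c k (uncovered C R fam \<omega>))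
           \<le> exp (- \<gamma>) * ell R c k C"
proof -
  \<comment> \<open>only finiteness, feasibility of \<open>(x, z)\<close> and positivity of \<open>\<gamma>\<close> and of the distances
     are used\<close>
  have feasible: "lp_feasible C R c k x z"
    using assms(11) unfolding lp_optimal_def by simp
  have "measure_pmf.expectation (sample_pmf C R fam) (\<lambda>\<omega>. ell R c k (uncovered C R fam \<omega>))
      = (\<Sum>u\<in>C. 2 / real k * distR c R u * measure_pmf.prob (sample_pmf C R fam)
           {\<omega>. \<forall>j \<in> covering_branches C R fam u. \<not> \<omega> j})"
    unfolding ell_def uncovered_eq using assms(1) by (rule expectation_sum_random_subset)
  also have "\<dots> \<le> (\<Sum>u\<in>C. 2 / real k * distR c R u * exp (- \<gamma>))"
    using assms(1,2,8,9,13) feasible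
    by (intro sum_mono mult_left_mono prob_uncovered_le_exp) (auto simp: less_imp_le)
  also have "\<dots> = exp (- \<gamma>) * ell R c k C"
    unfolding ell_def by (simp add: sum_distrib_left mult.commute)
  finally show ?thesis .
qed

end
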